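(* Let $p\in\{3,4,\dots\}$, $a\ge0$, $b>0$ satisfy either ($a>0$ and $b\in[p/2-1,p/2]$) or ($a=0$ and $b\in[p/2-1,p/2)$). Let $n\in\mathbb{Z}^+=\{0,1,2,\dots\}$ and $k\in\{1,2,3\}$. (1) If $a=0$, then $\frac{w_k(n)}{w_{k-1}(n)}=n+\frac p2+k-b-1$. (2) If $a>0$, then $\frac{w_k(n)}{w_{k-1}(n)}=n+\frac p2+k-b-1+\phi(n+k-1)$, where $\phi:\mathbb{Z}^+\to(0,\infty)$ is given by $\phi(n)=\frac{\int_0^\infty\frac{ab}{a+z}g_0(z)(z/2)^{n+p/2-1}e^{-z/2}dz}{\int_0^\infty g_0(z)(z/2)^{n+p/2-1}e^{-z/2}dz}$; moreover $\phi$ is bounded and $\phi(n)=O(n^{-1})$ as $n\to\infty$.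
   Context: $g_0(z)=(a+z)^{-b}$ and, for $n\in\mathbb{Z}^+$ and $k\in\{0,1,2,3\}$, $w_k(n)=\int_0^\infty\frac{g_0(z)(z/2)^{n+p/2+k-1}e^{-z/2}}{2\Gamma(n+p/2)}dz$. *)

theory Defs
  imports "HOL-Analysis.Analysis" "HOL-Library.Landau_Symbols"
begin

definition g0 :: "real \<Rightarrow> real \<Rightarrow> real \<Rightarrow> real" where
  "g0 a b z = (a + z) powr (- b)"

definition w :: "real \<Rightarrow> real \<Rightarrow> nat \<Rightarrow> nat \<Rightarrow> nat \<Rightarrow> real" where
  "w a b p k n =
     (LINT z:{0<..}|lborel. g0 a b z * (z / 2) powr (real n + real p / 2 + real k - 1) * exp (- z / 2))
     / (2 * Gamma (real n + real p / 2))"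

definition phi :: "real \<Rightarrow> real \<Rightarrow> nat \<Rightarrow> nat \<Rightarrow> real" where
  "phi a b p n =
     (LINT z:{0<..}|lborel. a * b / (a + z) * g0 a b z * (z / 2) powr (real n + real p / 2 - 1) * exp (- z / 2))
     / (LINT z:{0<..}|lborel. g0 a b z * (z / 2) powr (real n + real p / 2 - 1) * exp (- z / 2))"

end

theory Submission
  imports Defs "HOL-Real_Asymp.Real_Asymp"
begin

text \<open>Write M(c) for the integral of g0(z) (z/2)^c e^(-z/2) over (0, oo), which is
2 Gamma(n + p/2) w_k(n) for c = n + p/2 + k - 1, and N(c) for the same integral with the
extra weight a b / (a + z), so that phi(m) = N(c) / M(c) for c = m + p/2 - 1 and N = 0 when
a = 0. Integrating the derivative of g0(z) (z/2)^(c+1) e^(-z/2) over (0, oo) gives the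
recurrence M(c + 1) = (c + 1 - b) M(c) + N(c), which is the ratio formula. Since
0 < a b / (a + z) <= b, phi lies in (0, b]; since a b / (a + z) (z/2) <= a b / 2 and
M(c) >= (c - b) M(c - 1), phi(m) <= a b / (2 (m - 1)).\<close>

definition g0_moment :: "real \<Rightarrow> real \<Rightarrow> real \<Rightarrow> real" where
  "g0_moment a b c = (LINT z:{0<..}|lborel. g0 a b z * (z / 2) powr c * exp (- z / 2))"

definition g0_tilted_moment :: "real \<Rightarrow> real \<Rightarrow> real \<Rightarrow> real" where
  "g0_tilted_moment a b c =
     (LINT z:{0<..}|lborel. a * b / (a + z) * g0 a b z * (z / 2) powr c * exp (- z / 2))"

lemma set_integral_pos:
  fixes f :: "'a \<Rightarrow> real"
  assumes f: "set_integrable M A f" and A: "A \<in> sets M" "A \<notin> null_sets M"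
    and pos: "\<And>x. x \<in> A \<Longrightarrow> f x > 0"
  shows "(LINT x:A|M. f x) > 0"
proof -
  let ?g = "\<lambda>x. indicator A x *\<^sub>R f x"
  have g: "integrable M ?g" using f by (simp add: set_integrable_def)
  have g_nonneg: "AE x in M. 0 \<le> ?g x" using pos by (auto simp: indicator_def less_imp_le)
  have "integral\<^sup>L M ?g \<noteq> 0"
  proof
    assume "integral\<^sup>L M ?g = 0"
    then have "AE x in M. ?g x = 0" using integral_nonneg_eq_0_iff_AE[OF g g_nonneg] by simp
    then have "AE x in M. x \<notin> A" by eventually_elim (use pos in \<open>force simp: indicator_def\<close>)
    with A show False by (simp add: AE_iff_null_sets)
  qed
  with integral_nonneg_AE[OF g_nonneg] show ?thesis by (simp add: set_lebesgue_integral_def)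
qed

lemma positive_halfline_not_null: "{0<..} \<notin> null_sets (lborel :: real measure)"
proof
  assume "{0<..} \<in> null_sets (lborel :: real measure)"
  then have "{1..2::real} \<in> null_sets lborel" by (rule null_sets_subset) auto
  then show False by (simp add: null_sets_def)
qed

lemma set_integrable_powr_exp_half:
  fixes c :: real
  assumes "c > -1"
  shows "set_integrable lborel {0<..} (\<lambda>z. (z / 2) powr c * exp (- z / 2))"
proof -
  have "((\<lambda>t. t powr (c + 1 - 1) / exp t) has_integral Gamma (c + 1)) {0..}"
    by (rule Gamma_integral_real) (use assms in simp)
  then have "(\<lambda>t. t powr c / exp t) absolutely_integrable_on {0..}"
    by (intro nonnegative_absolutely_integrable_1) auto
  then have "integrable lborel (\<lambda>t. indicator {0..} t *\<^sub>R (t powr c / exp t))"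
    by (simp add: absolutely_integrable_on_def set_integrable_def integrable_completion)
  then have "integrable lborel (\<lambda>t. indicator {0<..} t *\<^sub>R (t powr c / exp t))"
    by (rule Bochner_Integration.integrable_bound) (auto split: split_indicator)
  then have "integrable lborel (\<lambda>z. indicator {0<..} (z / 2) *\<^sub>R ((z / 2) powr c / exp (z / 2)))"
    using lborel_integrable_real_affine_iff[of "1 / 2" "\<lambda>t. indicator {0<..} t *\<^sub>R (t powr c / exp t)" 0]
    by simp
  then show ?thesis
    unfolding set_integrable_def
    by (rule back_subst[where P = "integrable lborel"])
      (auto simp: fun_eq_iff indicator_def exp_minus field_simps)
qed

lemma set_integrable_g0_moment:
  fixes a b c :: real
  assumes ha: "a \<ge> 0" and hb: "b > 0" and hc: "(a > 0 \<and> c > -1) \<or> (a = 0 \<and> c - b > -1)"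
  shows "set_integrable lborel {0<..} (\<lambda>z. g0 a b z * (z / 2) powr c * exp (- z / 2))"
proof -
  have meas: "set_borel_measurable lborel {0<..} (\<lambda>z. g0 a b z * (z / 2) powr c * exp (- z / 2))"
    unfolding set_borel_measurable_def g0_def by measurable
  show ?thesis
  proof (cases "a > 0")
    case True
    with hc have "c > -1" by auto
    then have "set_integrable lborel {0<..} (\<lambda>z. a powr (-b) * ((z / 2) powr c * exp (- z / 2)))"
      by (intro set_integrable_mult_right set_integrable_powr_exp_half)
    then show ?thesis
    proof (rule set_integrable_bound[OF _ meas], intro AE_I2 impI)
      fix z :: real assume "z \<in> {0<..}"
      with True hb have "(a + z) powr (-b) \<le> a powr (-b)"
        by (intro powr_mono2') auto
      with \<open>z \<in> {0<..}\<close> True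
      show "norm (g0 a b z * (z / 2) powr c * exp (- z / 2))
          \<le> norm (a powr (-b) * ((z / 2) powr c * exp (- z / 2)))"
        unfolding g0_def by (auto simp: abs_mult intro!: mult_right_mono)
    qed
  next
    case False
    with hc ha have a0: "a = 0" and "c - b > -1" by auto
    then have "set_integrable lborel {0<..} (\<lambda>z. 2 powr (-b) * ((z / 2) powr (c - b) * exp (- z / 2)))"
      by (intro set_integrable_mult_right set_integrable_powr_exp_half)
    then show ?thesis
    proof (rule set_integrable_bound[OF _ meas], intro AE_I2 impI)
      fix z :: real assume "z \<in> {0<..}"
      then have "z powr (-b) = 2 powr (-b) * (z / 2) powr (-b)"
        using powr_mult[of 2 "z / 2" "-b"] by simp
      then have "z powr (-b) * (z / 2) powr c = 2 powr (-b) * (z / 2) powr (c - b)"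
        by (simp add: powr_add[symmetric])
      then show "norm (g0 a b z * (z / 2) powr c * exp (- z / 2))
          \<le> norm (2 powr (-b) * ((z / 2) powr (c - b) * exp (- z / 2)))"
        using a0 unfolding g0_def by (simp add: mult.assoc)
    qed
  qed
qed

lemma tilted_weight_bounds:
  fixes a b z :: real
  assumes "a \<ge> 0" "b > 0" "z > 0"
  shows "0 \<le> a * b / (a + z)" "a * b / (a + z) \<le> b" "a * b / (a + z) * (z / 2) \<le> a * b / 2"
  using assms by (auto simp: field_simps intro!: mult_left_mono)

lemma set_integrable_g0_tilted_moment:
  fixes a b c :: real
  assumes ha: "a \<ge> 0" and hb: "b > 0" and hc: "(a > 0 \<and> c > -1) \<or> (a = 0 \<and> c - b > -1)"
  shows "set_integrable lborel {0<..} (\<lambda>z. a * b / (a + z) * g0 a b z * (z / 2) powr c * exp (- z / 2))"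
proof -
  have meas: "set_borel_measurable lborel {0<..}
      (\<lambda>z. a * b / (a + z) * g0 a b z * (z / 2) powr c * exp (- z / 2))"
    unfolding set_borel_measurable_def g0_def by measurable
  have "set_integrable lborel {0<..} (\<lambda>z. b * (g0 a b z * (z / 2) powr c * exp (- z / 2)))"
    using set_integrable_g0_moment[OF assms] by (rule set_integrable_mult_right)
  then show ?thesis
  proof (rule set_integrable_bound[OF _ meas], intro AE_I2 impI)
    fix z :: real assume "z \<in> {0<..}"
    define X where "X = g0 a b z * (z / 2) powr c * exp (- z / 2)"
    have X: "0 \<le> X" unfolding X_def g0_def by simp
    have weight: "0 \<le> a * b / (a + z)" "a * b / (a + z) \<le> b"
      using tilted_weight_bounds ha hb \<open>z \<in> {0<..}\<close> by auto
    have "0 \<le> a * b / (a + z) * X" using weight(1) X by (rule mult_nonneg_nonneg)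
    moreover have "a * b / (a + z) * X \<le> b * X" using weight(2) X by (rule mult_right_mono)
    ultimately show "norm (a * b / (a + z) * g0 a b z * (z / 2) powr c * exp (- z / 2))
        \<le> norm (b * (g0 a b z * (z / 2) powr c * exp (- z / 2)))"
      unfolding X_def real_norm_def mult.assoc by (metis abs_of_nonneg order_trans)
  qed
qed

lemma g0_moment_pos:
  fixes a b c :: real
  assumes "a \<ge> 0" "b > 0" "(a > 0 \<and> c > -1) \<or> (a = 0 \<and> c - b > -1)"
  shows "g0_moment a b c > 0"
  unfolding g0_moment_def
  by (rule set_integral_pos[OF set_integrable_g0_moment[OF assms] _ positive_halfline_not_null])
    (use assms(1) in \<open>auto simp: g0_def\<close>)

lemma g0_tilted_moment_pos:
  fixes a b c :: real
  assumes "a > 0" "b > 0" "c > -1"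
  shows "g0_tilted_moment a b c > 0"
  unfolding g0_tilted_moment_def
  by (rule set_integral_pos[OF set_integrable_g0_tilted_moment _ positive_halfline_not_null])
    (use assms in \<open>auto simp: g0_def\<close>)

lemma has_real_derivative_g0_kernel:
  fixes a b s z :: real
  assumes ha: "a \<ge> 0" and z: "z > 0"
  shows "((\<lambda>z. g0 a b z * (z / 2) powr s * exp (- z / 2)) has_real_derivative
     (s - b) / 2 * (g0 a b z * (z / 2) powr (s - 1) * exp (- z / 2))
     + 1 / 2 * (a * b / (a + z) * g0 a b z * (z / 2) powr (s - 1) * exp (- z / 2))
     - 1 / 2 * (g0 a b z * (z / 2) powr s * exp (- z / 2))) (at z)"
proof -
  have az: "a + z > 0" using ha z by simp
  have D: "((\<lambda>z. (a + z) powr (-b) * (z / 2) powr s * exp (- z / 2)) has_real_derivative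
      - b * (a + z) powr (- b - 1) * (z / 2) powr s * exp (- z / 2)
      + (a + z) powr (-b) * (s * (z / 2) powr (s - 1) / 2) * exp (- z / 2)
      - (a + z) powr (-b) * (z / 2) powr s * exp (- z / 2) / 2) (at z)"
    using az z by (auto intro!: derivative_eq_intros simp: field_simps)
  have e1: "(a + z) powr (- b - 1) = (a + z) powr (-b) / (a + z)"
    using az by (simp add: powr_diff)
  have e2: "(z / 2) powr s = z / 2 * (z / 2) powr (s - 1)"
    using z powr_add[of "z / 2" 1 "s - 1"] by simp
  \<comment> \<open>the tilted weight appears through b / (a + z) = b / z - a b / (z (a + z))\<close>
  show ?thesis
    unfolding g0_def
    by (rule DERIV_cong[OF D], unfold e1 e2) (use az in \<open>simp add: field_simps\<close>)
qed

lemma g0_moment_recurrence: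
  fixes a b c :: real
  assumes ha: "a \<ge> 0" and hb: "b > 0" and hc: "(a > 0 \<and> c > -1) \<or> (a = 0 \<and> c - b > -1)"
  shows "g0_moment a b (c + 1) = (c + 1 - b) * g0_moment a b c + g0_tilted_moment a b c"
proof -
  define F where "F z = g0 a b z * (z / 2) powr (c + 1) * exp (- z / 2)" for z
  define f where "f z = g0 a b z * (z / 2) powr c * exp (- z / 2)" for z
  define h where "h z = a * b / (a + z) * g0 a b z * (z / 2) powr c * exp (- z / 2)" for z
  have hc1: "(a > 0 \<and> c + 1 > -1) \<or> (a = 0 \<and> c + 1 - b > -1)" using hc by auto
  have int_F: "set_integrable lborel {0<..} F"
    unfolding F_def by (rule set_integrable_g0_moment[OF ha hb hc1])
  have int_f: "set_integrable lborel {0<..} f"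
    unfolding f_def by (rule set_integrable_g0_moment[OF ha hb hc])
  have int_h: "set_integrable lborel {0<..} h"
    unfolding h_def by (rule set_integrable_g0_tilted_moment[OF ha hb hc])
  define F' where "F' z = (c + 1 - b) / 2 * f z + 1 / 2 * h z - 1 / 2 * F z" for z
  have int_F': "set_integrable lborel {0<..} F'"
    unfolding F'_def using int_F int_f int_h by (intro set_integral_add set_integral_diff) auto
  have "(LBINT z=ereal 0..\<infinity>. F' z) = 0 - 0"
  proof (rule interval_integral_FTC_integrable[where F = F])
    fix z assume "ereal 0 < ereal z" "ereal z < \<infinity>"
    then have "z > 0" by simp
    show "(F has_vector_derivative F' z) (at z)"
      using has_real_derivative_g0_kernel[OF ha \<open>z > 0\<close>, of b "c + 1"]
      unfolding has_real_derivative_iff_has_vector_derivative[symmetric] F_def F'_def f_def h_def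
      by simp
    show "isCont F' z"
      unfolding F'_def F_def f_def h_def g0_def using \<open>z > 0\<close> ha
      by (auto intro!: continuous_intros)
  next
    show "set_integrable lborel (einterval (ereal 0) \<infinity>) F'" using int_F' by simp
  next
    show "((F \<circ> real_of_ereal) \<longlongrightarrow> 0) (at_right (ereal 0))"
      unfolding ereal_tendsto_simps F_def g0_def
    proof (cases "a > 0")
      case True
      with hc have "c + 1 > 0" by auto
      with True hb show "((\<lambda>z. (a + z) powr - b * (z / 2) powr (c + 1) * exp (- z / 2)) \<longlongrightarrow> 0) (at_right 0)"
        by real_asymp
    next
      case False
      with hc ha have "a = 0" "c + 1 > b" by auto
      with hb show "((\<lambda>z. (a + z) powr - b * (z / 2) powr (c + 1) * exp (- z / 2)) \<longlongrightarrow> 0) (at_right 0)"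
        by real_asymp
    qed
  next
    show "((F \<circ> real_of_ereal) \<longlongrightarrow> 0) (at_left \<infinity>)"
      unfolding ereal_tendsto_simps F_def g0_def using ha hb by real_asymp
  qed simp
  then have "(LINT z:{0<..}|lborel. F' z) = 0"
    by (simp add: interval_integral_to_infinity_eq)
  moreover have "(LINT z:{0<..}|lborel. F' z) = (c + 1 - b) / 2 * (LINT z:{0<..}|lborel. f z)
      + 1 / 2 * (LINT z:{0<..}|lborel. h z) - 1 / 2 * (LINT z:{0<..}|lborel. F z)"
    unfolding F'_def using int_F int_f int_h by (simp add: set_integral_add set_integral_diff)
  ultimately show ?thesis
    unfolding g0_moment_def g0_tilted_moment_def F_def[symmetric] f_def[symmetric] h_def[symmetric]
    by (simp add: field_simps)
qed

lemma g0_tilted_moment_le: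
  fixes a b c :: real
  assumes ha: "a \<ge> 0" and hb: "b > 0" and hc: "(a > 0 \<and> c > -1) \<or> (a = 0 \<and> c - b > -1)"
  shows "g0_tilted_moment a b c \<le> b * g0_moment a b c"
proof -
  have "g0_tilted_moment a b c
      \<le> (LINT z:{0<..}|lborel. b * (g0 a b z * (z / 2) powr c * exp (- z / 2)))"
    unfolding g0_tilted_moment_def
  proof (rule set_integral_mono[OF set_integrable_g0_tilted_moment[OF assms]])
    show "set_integrable lborel {0<..} (\<lambda>z. b * (g0 a b z * (z / 2) powr c * exp (- z / 2)))"
      using set_integrable_g0_moment[OF assms] by (rule set_integrable_mult_right)
    fix z :: real assume "z \<in> {0<..}"
    then have "a * b / (a + z) \<le> b" using tilted_weight_bounds ha hb by simp
    moreover have "0 \<le> g0 a b z * (z / 2) powr c * exp (- z / 2)" unfolding g0_def by simp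
    ultimately show "a * b / (a + z) * g0 a b z * (z / 2) powr c * exp (- z / 2)
        \<le> b * (g0 a b z * (z / 2) powr c * exp (- z / 2))"
      unfolding mult.assoc by (rule mult_right_mono)
  qed
  then show ?thesis by (simp add: g0_moment_def)
qed

lemma g0_tilted_moment_le_shift:
  fixes a b c :: real
  assumes ha: "a \<ge> 0" and hb: "b > 0" and hc: "(a > 0 \<and> c > -1) \<or> (a = 0 \<and> c - b > -1)"
  shows "g0_tilted_moment a b (c + 1) \<le> a * b / 2 * g0_moment a b c"
proof -
  have hc1: "(a > 0 \<and> c + 1 > -1) \<or> (a = 0 \<and> c + 1 - b > -1)" using hc by auto
  have "g0_tilted_moment a b (c + 1)
      \<le> (LINT z:{0<..}|lborel. a * b / 2 * (g0 a b z * (z / 2) powr c * exp (- z / 2)))"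
    unfolding g0_tilted_moment_def
  proof (rule set_integral_mono[OF set_integrable_g0_tilted_moment[OF ha hb hc1]])
    show "set_integrable lborel {0<..} (\<lambda>z. a * b / 2 * (g0 a b z * (z / 2) powr c * exp (- z / 2)))"
      using set_integrable_g0_moment[OF assms] by (rule set_integrable_mult_right)
    fix z :: real assume "z \<in> {0<..}"
    then have "a * b / (a + z) * (z / 2) \<le> a * b / 2" using tilted_weight_bounds ha hb by simp
    moreover have "0 \<le> g0 a b z * (z / 2) powr c * exp (- z / 2)" unfolding g0_def by simp
    ultimately have "a * b / (a + z) * (z / 2) * (g0 a b z * (z / 2) powr c * exp (- z / 2))
        \<le> a * b / 2 * (g0 a b z * (z / 2) powr c * exp (- z / 2))"
      by (rule mult_right_mono)
    moreover have "(z / 2) powr (c + 1) = (z / 2) powr c * (z / 2)"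
      using \<open>z \<in> {0<..}\<close> by (simp add: powr_add)
    ultimately show "a * b / (a + z) * g0 a b z * (z / 2) powr (c + 1) * exp (- z / 2)
        \<le> a * b / 2 * (g0 a b z * (z / 2) powr c * exp (- z / 2))"
      by (simp only: mult_ac)
  qed
  then show ?thesis by (simp add: g0_moment_def)
qed

lemma g0_tilted_moment_ratio_le:
  fixes a b c :: real
  assumes ha: "a > 0" and hb: "b > 0" and hc: "c > b"
  shows "g0_tilted_moment a b c / g0_moment a b c \<le> a * b / (2 * (c - b))"
proof -
  have hc': "(a > 0 \<and> c - 1 > -1) \<or> (a = 0 \<and> c - 1 - b > -1)" using ha hb hc by auto
  have M_pos: "g0_moment a b (c - 1) > 0"
    using g0_moment_pos[OF _ hb hc'] ha by simp
  have "(c - b) * g0_moment a b (c - 1) \<le> g0_moment a b c"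
    using g0_moment_recurrence[OF _ hb hc'] g0_tilted_moment_pos[of a b "c - 1"] ha hb hc by simp
  moreover have "g0_tilted_moment a b c \<le> a * b / 2 * g0_moment a b (c - 1)"
    using g0_tilted_moment_le_shift[OF _ hb hc'] ha by simp
  ultimately have "g0_tilted_moment a b c / g0_moment a b c
      \<le> a * b / 2 * g0_moment a b (c - 1) / ((c - b) * g0_moment a b (c - 1))"
    using M_pos ha hb hc g0_tilted_moment_pos[OF ha hb, of c] by (intro frac_le) auto
  also have "\<dots> = a * b / (2 * (c - b))"
    using M_pos by simp
  finally show ?thesis .
qed

lemma phi_eq_moment_ratio:
  "phi a b p m = g0_tilted_moment a b (real m + real p / 2 - 1) / g0_moment a b (real m + real p / 2 - 1)"
  unfolding phi_def g0_tilted_moment_def g0_moment_def ..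

lemma phi_zero: "phi 0 b p m = 0"
  by (simp add: phi_def)

lemma phi_pos:
  assumes "a > 0" "b > 0" "p > 0"
  shows "phi a b p m > 0"
  using assms g0_tilted_moment_pos g0_moment_pos by (simp add: phi_eq_moment_ratio)

lemma phi_le:
  assumes "a > 0" "b > 0" "p > 0"
  shows "phi a b p m \<le> b"
proof -
  let ?c = "real m + real p / 2 - 1"
  have "?c > -1" using assms by simp
  then have "g0_tilted_moment a b ?c \<le> b * g0_moment a b ?c" "g0_moment a b ?c > 0"
    using assms g0_tilted_moment_le g0_moment_pos by simp_all
  then show ?thesis by (simp add: phi_eq_moment_ratio divide_le_eq)
qed

lemma phi_le_inverse:
  assumes "a > 0" "b > 0" "b \<le> real p / 2" "m \<ge> 2"
  shows "phi a b p m \<le> a * b / real m"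
proof -
  let ?c = "real m + real p / 2 - 1"
  have "phi a b p m \<le> a * b / (2 * (?c - b))"
    unfolding phi_eq_moment_ratio using assms by (intro g0_tilted_moment_ratio_le) auto
  also have "\<dots> \<le> a * b / real m"
    using assms by (intro divide_left_mono) auto
  finally show ?thesis .
qed

lemma phi_bigo_inverse:
  assumes "a > 0" "b > 0" "b \<le> real p / 2"
  shows "phi a b p \<in> O(\<lambda>m. 1 / real m)"
proof (rule bigoI[where c = "a * b"])
  show "\<forall>\<^sub>F m in at_top. norm (phi a b p m) \<le> a * b * norm (1 / real m)"
    using eventually_ge_at_top[of 2]
  proof eventually_elim
    case (elim m)
    have "p > 0" using assms by simp
    with assms elim show ?case
      using phi_pos[of a b p m] phi_le_inverse[of a b p m] by simp
  qed
qed

lemma w_ratio: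
  assumes ha: "a \<ge> 0" and hb: "b > 0" and hp: "p > 0" and hk: "k \<ge> 1"
    and hc: "(a > 0 \<and> real n + real p / 2 + real k - 2 > -1)
           \<or> (a = 0 \<and> real n + real p / 2 + real k - 2 - b > -1)"
  shows "w a b p k n / w a b p (k - 1) n = real n + real p / 2 + real k - b - 1 + phi a b p (n + k - 1)"
proof -
  define c where "c = real n + real p / 2 + real k - 2"
  define G where "G = 2 * Gamma (real n + real p / 2)"
  have hc_c: "(a > 0 \<and> c > -1) \<or> (a = 0 \<and> c - b > -1)" using hc unfolding c_def .
  have "G > 0" unfolding G_def using hp by (simp add: Gamma_real_pos)
  have M_pos: "g0_moment a b c > 0" by (rule g0_moment_pos[OF ha hb hc_c])
  have "w a b p k n = g0_moment a b (c + 1) / G"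
    unfolding w_def g0_moment_def c_def G_def by (simp add: algebra_simps)
  moreover have "w a b p (k - 1) n = g0_moment a b c / G"
    unfolding w_def g0_moment_def c_def G_def using hk by (simp add: of_nat_diff algebra_simps)
  ultimately have "w a b p k n / w a b p (k - 1) n = g0_moment a b (c + 1) / g0_moment a b c"
    using \<open>G > 0\<close> by simp
  also have "\<dots> = c + 1 - b + g0_tilted_moment a b c / g0_moment a b c"
    using g0_moment_recurrence[OF ha hb hc_c] M_pos by (simp add: field_simps)
  also have "g0_tilted_moment a b c / g0_moment a b c = phi a b p (n + k - 1)"
    unfolding phi_eq_moment_ratio c_def using hk by (simp add: of_nat_diff algebra_simps)
  finally show ?thesis unfolding c_def by simp
qed

theorem propositionA3:
  fixes a b :: real and p n k :: nat
  assumes hp: "p \<ge> 3"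
    and ha: "a \<ge> 0" and hb: "b > 0"
    and hab: "(a > 0 \<and> real p / 2 - 1 \<le> b \<and> b \<le> real p / 2)
            \<or> (a = 0 \<and> real p / 2 - 1 \<le> b \<and> b < real p / 2)"
    and hk: "k \<in> {1, 2, 3}"
  shows "(a = 0 \<longrightarrow>
            w a b p k n / w a b p (k - 1) n = real n + real p / 2 + real k - b - 1)
       \<and> (a > 0 \<longrightarrow>
            w a b p k n / w a b p (k - 1) n
              = real n + real p / 2 + real k - b - 1 + phi a b p (n + k - 1)
          \<and> (\<forall>m. phi a b p m > 0)
          \<and> (\<exists>C. \<forall>m. \<bar>phi a b p m\<bar> \<le> C)
          \<and> (\<lambda>m. phi a b p m) \<in> O(\<lambda>m. 1 / real m))"
proof -
  have "k \<ge> 1" "p > 0" "real p \<ge> 3" using hk hp by auto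
  have ratio: "w a b p k n / w a b p (k - 1) n
      = real n + real p / 2 + real k - b - 1 + phi a b p (n + k - 1)"
    using hab \<open>k \<ge> 1\<close> \<open>real p \<ge> 3\<close> by (intro w_ratio[OF ha hb \<open>p > 0\<close> \<open>k \<ge> 1\<close>]) auto
  show ?thesis
  proof (intro conjI impI)
    show "w a b p k n / w a b p (k - 1) n = real n + real p / 2 + real k - b - 1" if "a = 0"
      using ratio that by (simp add: phi_zero)
    assume "a > 0"
    with hab have "b \<le> real p / 2" by auto
    show "w a b p k n / w a b p (k - 1) n
        = real n + real p / 2 + real k - b - 1 + phi a b p (n + k - 1)"
      by (fact ratio)
    show "\<forall>m. phi a b p m > 0"
      using phi_pos \<open>a > 0\<close> hb \<open>p > 0\<close> by blast
    show "\<exists>C. \<forall>m. \<bar>phi a b p m\<bar> \<le> C"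
      using phi_pos phi_le \<open>a > 0\<close> hb \<open>p > 0\<close> by (metis abs_of_pos)
    show "(\<lambda>m. phi a b p m) \<in> O(\<lambda>m. 1 / real m)"
      using phi_bigo_inverse \<open>a > 0\<close> hb \<open>b \<le> real p / 2\<close> by simp
  qed
qed

end
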